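(* Let $\Theta\subseteq\mathbb Z^{Nd}$ be finite and symmetric, let $\eta>4Nd$, and assume that for all $\mathbf x,\mathbf y\in\Theta$ with $\mathbf x\ne\pi\mathbf y$ for every $\pi\in S_N$, $$|(\lambda V(\mathbf x)+U(\mathbf x))-(\lambda V(\mathbf y)+U(\mathbf y))|\ge\eta.$$ Then for every normalized eigenfunction $\varphi\in\ell^2(\Theta)$ of $H_\Theta$ there exists $\mathbf x\in\Theta$ such that $$|\varphi(\mathbf y)|\le\Big(\frac{2Nd}{\eta-2Nd}\Big)^{\min_{\pi\in S_N}\|\mathbf y-\pi\mathbf x\|_1}\quad\text{for all }\mathbf y\in\Theta.$$
   Context: Let $d,N\ge1$. Points of $\mathbb Z^{Nd}$: $\mathbf x=(x_1,\dots,x_N)$, $x_j\in\mathbb Z^d$; $S_N$ acts by $\pi\mathbf x=(x_{\pi(1)},\dots,x_{\pi(N)})$; symmetric = invariant under all $\pi\in S_N$. $H=-\Delta^{(N)}+\lambda V+U$ on $\ell^2(\mathbb Z^{Nd})$ with $\lambda>0$, $(\Delta^{(N)}\varphi)(\mathbf x)=\sum_{\|\mathbf y-\mathbf x\|_1=1}\varphi(\mathbf y)$, $V(\mathbf x)=\sum_j\mathcal V(x_j)$ for a (fixed) real function $\mathcal V$ on $\mathbb Z^d$, $U(\mathbf x)=\sum_{i<j}\mathcal U(x_i-x_j)$ with $\mathcal U:\mathbb Z^d\to\mathbb R$ finitely supported; $H_\Theta=1_\Theta H1_\Theta$ on $\ell^2(\Theta)$. *)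

theory Defs
  imports "HOL-Analysis.Analysis" "HOL-Combinatorics.Permutations"
begin

text \<open>A configuration of N particles in Z^d: x :: 'n \<Rightarrow> 'd \<Rightarrow> int,
  with N = CARD('n), d = CARD('d); x j is the position of particle j.\<close>

type_synonym ('n, 'd) config = "'n \<Rightarrow> 'd \<Rightarrow> int"

definition l1dist :: "('n::finite, 'd::finite) config \<Rightarrow> ('n, 'd) config \<Rightarrow> nat" where
  "l1dist x y = nat (\<Sum>j\<in>UNIV. \<Sum>k\<in>UNIV. \<bar>x j k - y j k\<bar>)"

definition perm_act :: "('n \<Rightarrow> 'n) \<Rightarrow> ('n, 'd) config \<Rightarrow> ('n, 'd) config" where
  "perm_act \<pi> x = (\<lambda>j. x (\<pi> j))"

definition symmetric_set :: "('n, 'd) config set \<Rightarrow> bool" where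
  "symmetric_set \<Theta> \<longleftrightarrow> (\<forall>\<pi> x. \<pi> permutes (UNIV::'n set) \<longrightarrow> x \<in> \<Theta> \<longrightarrow> perm_act \<pi> x \<in> \<Theta>)"

definition sym_dist :: "('n::finite, 'd::finite) config \<Rightarrow> ('n, 'd) config \<Rightarrow> nat" where
  "sym_dist y x = Min {l1dist y (perm_act \<pi> x) | \<pi>. \<pi> permutes (UNIV::'n set)}"

definition Vpot :: "(('d \<Rightarrow> int) \<Rightarrow> real) \<Rightarrow> ('n::finite, 'd) config \<Rightarrow> real" where
  "Vpot calV x = (\<Sum>j\<in>UNIV. calV (x j))"

definition Upot :: "(('d \<Rightarrow> int) \<Rightarrow> real) \<Rightarrow> ('n::{finite,linorder}, 'd) config \<Rightarrow> real" where
  "Upot calU x = (\<Sum>(i,j)\<in>{(i,j). i < j}. calU (x i - x j))"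

text \<open>Restricted Hamiltonian H_Theta = 1_Theta (-Delta + lambda V + U) 1_Theta,
  acting on functions on Theta (values outside Theta are ignored).\<close>
definition H_Theta :: "('n::{finite,linorder}, 'd::finite) config set \<Rightarrow> real
    \<Rightarrow> (('d \<Rightarrow> int) \<Rightarrow> real) \<Rightarrow> (('d \<Rightarrow> int) \<Rightarrow> real)
    \<Rightarrow> (('n, 'd) config \<Rightarrow> complex) \<Rightarrow> ('n, 'd) config \<Rightarrow> complex" where
  "H_Theta \<Theta> lam calV calU \<phi> x =
     (if x \<in> \<Theta> then
        - (\<Sum>y\<in>{y\<in>\<Theta>. l1dist y x = 1}. \<phi> y)
        + complex_of_real (lam * Vpot calV x + Upot calU x) * \<phi> x
      else 0)"

end

theory Submission imports Defs begin

text \<open>At a configuration x0 where |\<phi>| is maximal, the eigenvalue equation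
  (W(x0) - E) \<phi>(x0) = \<Sum> \<phi>(neighbours), with W = \<lambda>V + U and at most 2Nd
  neighbours, forces |W(x0) - E| \<le> 2Nd. By the gap hypothesis every y that is
  not a permutation of x0 then has |W(y) - E| \<ge> \<eta> - 2Nd, so |\<phi>(y)| is at most
  2Nd/(\<eta> - 2Nd) times the largest |\<phi>| among its neighbours. A unit step changes
  the symmetrised distance to x0 by at most one, and induction on that distance
  gives the decay.\<close>

lemma of_nat_l1dist: "int (l1dist x y) = (\<Sum>j\<in>UNIV. \<Sum>k\<in>UNIV. \<bar>x j k - y j k\<bar>)"
  unfolding l1dist_def by (simp add: sum_nonneg)

lemma l1dist_commute: "l1dist x y = l1dist y x"
  unfolding l1dist_def by (simp add: abs_minus_commute)

lemma l1dist_self [simp]: "l1dist x x = 0"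
  unfolding l1dist_def by simp

lemma l1dist_triangle: "l1dist x z \<le> l1dist x y + l1dist y z"
proof -
  have "(\<Sum>j\<in>UNIV. \<Sum>k\<in>UNIV. \<bar>x j k - z j k\<bar>) \<le>
        (\<Sum>j\<in>UNIV. \<Sum>k\<in>UNIV. \<bar>x j k - y j k\<bar> + \<bar>y j k - z j k\<bar>)"
    by (intro sum_mono) auto
  then have "int (l1dist x z) \<le> int (l1dist x y) + int (l1dist y z)"
    by (simp add: of_nat_l1dist sum.distrib)
  then show ?thesis by simp
qed

lemma l1dist_eq_1_imp_unit_step:
  fixes x y :: "('n::finite, 'd::finite) config"
  assumes "l1dist y x = 1"
  obtains j k s where "s \<in> {1, -1}" and "y = x(j := (x j)(k := x j k + s))"
proof -
  define f where "f p = \<bar>y (fst p) (snd p) - x (fst p) (snd p)\<bar>" for p :: "'n \<times> 'd"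
  have nonneg: "f p \<ge> 0" for p
    unfolding f_def by simp
  have sum_f: "sum f UNIV = 1"
    using of_nat_l1dist[of y x] assms
    by (simp add: f_def sum.cartesian_product case_prod_beta flip: UNIV_Times_UNIV)
  then obtain p where "f p \<noteq> 0"
    by (metis sum.neutral zero_neq_one)
  moreover have "sum f UNIV = f p + sum f (UNIV - {p})"
    by (simp add: sum.remove)
  moreover have "sum f (UNIV - {p}) \<ge> 0"
    by (simp add: sum_nonneg nonneg)
  ultimately have fp: "f p = 1" and rest: "sum f (UNIV - {p}) = 0"
    using sum_f nonneg[of p] by linarith+
  have others: "f q = 0" if "q \<noteq> p" for q
    using rest sum_nonneg_eq_0_iff[of "UNIV - {p}" f] nonneg that by auto
  define s where "s = y (fst p) (snd p) - x (fst p) (snd p)"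
  have "s \<in> {1, -1}"
    using fp unfolding f_def s_def by (auto simp: abs_if split: if_splits)
  moreover have "y = x(fst p := (x (fst p))(snd p := x (fst p) (snd p) + s))"
  proof (intro ext)
    fix j k
    show "y j k = (x(fst p := (x (fst p))(snd p := x (fst p) (snd p) + s))) j k"
      using others[of "(j, k)"] unfolding f_def s_def by (cases p) auto
  qed
  ultimately show ?thesis
    using that by blast
qed

lemma card_l1dist_eq_1_le:
  fixes x :: "('n::finite, 'd::finite) config"
  shows "card {y\<in>S. l1dist y x = 1} \<le> 2 * CARD('n) * CARD('d)"
proof -
  define step where "step = (\<lambda>(j, k, s). x(j := (x j)(k := x j k + s)))"
  have "{y\<in>S. l1dist y x = 1} \<subseteq> step ` (UNIV \<times> UNIV \<times> {1, -1})"
  proof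
    fix y
    assume "y \<in> {y\<in>S. l1dist y x = 1}"
    then obtain j k s where "s \<in> {1, -1}" "y = x(j := (x j)(k := x j k + s))"
      using l1dist_eq_1_imp_unit_step by blast
    then show "y \<in> step ` (UNIV \<times> UNIV \<times> {1, -1})"
      unfolding step_def by force
  qed
  then have "card {y\<in>S. l1dist y x = 1} \<le> card (step ` (UNIV \<times> UNIV \<times> {1, -1}))"
    by (intro card_mono) auto
  also have "\<dots> \<le> card (UNIV \<times> UNIV \<times> {1, -1} :: ('n \<times> 'd \<times> int) set)"
    by (rule card_image_le) simp
  also have "\<dots> = 2 * CARD('n) * CARD('d)"
    by (simp add: card_cartesian_product)
  finally show ?thesis .
qed

lemma sym_dist_le_l1dist:
  fixes x y :: "('n::finite, 'd::finite) config"
  assumes "\<pi> permutes (UNIV :: 'n set)"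
  shows "sym_dist y x \<le> l1dist y (perm_act \<pi> x)"
  unfolding sym_dist_def
  by (rule Min_le) (use assms finite_permutations[of "UNIV :: 'n set"] in auto)

lemma sym_dist_attained:
  fixes x y :: "('n::finite, 'd::finite) config"
  obtains \<pi> where "\<pi> permutes (UNIV :: 'n set)" and "sym_dist y x = l1dist y (perm_act \<pi> x)"
proof -
  have "sym_dist y x \<in> {l1dist y (perm_act \<pi> x) | \<pi>. \<pi> permutes (UNIV :: 'n set)}"
    unfolding sym_dist_def
    using finite_permutations[of "UNIV :: 'n set"] by (intro Min_in) (auto intro: permutes_id)
  then show ?thesis
    using that by blast
qed

lemma sym_dist_triangle:
  fixes x y z :: "('n::finite, 'd::finite) config"
  shows "sym_dist y x \<le> l1dist y z + sym_dist z x"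
proof -
  obtain \<pi> where \<pi>: "\<pi> permutes (UNIV :: 'n set)" "sym_dist z x = l1dist z (perm_act \<pi> x)"
    by (rule sym_dist_attained)
  have "sym_dist y x \<le> l1dist y (perm_act \<pi> x)"
    by (rule sym_dist_le_l1dist[OF \<pi>(1)])
  also have "\<dots> \<le> l1dist y z + l1dist z (perm_act \<pi> x)"
    by (rule l1dist_triangle)
  finally show ?thesis
    using \<pi>(2) by simp
qed

lemma sym_dist_perm_act:
  fixes x :: "('n::finite, 'd::finite) config"
  assumes "\<pi> permutes (UNIV :: 'n set)"
  shows "sym_dist (perm_act \<pi> x) x = 0"
  using sym_dist_le_l1dist[OF assms, of "perm_act \<pi> x" x] by simp

lemma norm_le_1_if_sum_squares_eq_1:
  fixes \<phi> :: "'a \<Rightarrow> 'b::real_normed_vector"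
  assumes "finite S" "(\<Sum>x\<in>S. (norm (\<phi> x))\<^sup>2) = 1" "y \<in> S"
  shows "norm (\<phi> y) \<le> 1"
proof -
  have "(norm (\<phi> y))\<^sup>2 \<le> 1"
    using assms member_le_sum[of y S "\<lambda>x. (norm (\<phi> x))\<^sup>2"] by simp
  then show ?thesis
    by (simp add: power_le_one_iff)
qed

lemma ex_max_norm_nonzero_if_sum_squares_eq_1:
  fixes \<phi> :: "'a \<Rightarrow> 'b::real_normed_vector"
  assumes "finite S" "(\<Sum>x\<in>S. (norm (\<phi> x))\<^sup>2) = 1"
  obtains x0 where "x0 \<in> S" "\<phi> x0 \<noteq> 0" "\<And>y. y \<in> S \<Longrightarrow> norm (\<phi> y) \<le> norm (\<phi> x0)"
proof -
  have "S \<noteq> {}"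
    using assms(2) by auto
  then have "Max ((\<lambda>y. norm (\<phi> y)) ` S) \<in> (\<lambda>y. norm (\<phi> y)) ` S"
    using assms(1) by (intro Max_in) auto
  then obtain x0 where x0: "x0 \<in> S" "norm (\<phi> x0) = Max ((\<lambda>y. norm (\<phi> y)) ` S)"
    by auto
  then have max: "norm (\<phi> y) \<le> norm (\<phi> x0)" if "y \<in> S" for y
    using assms(1) that by simp
  have "\<phi> x0 \<noteq> 0"
  proof
    assume "\<phi> x0 = 0"
    then have "\<phi> y = 0" if "y \<in> S" for y
      using max[OF that] by simp
    then show False
      using assms(2) by simp
  qed
  then show ?thesis
    using that x0(1) max by blast
qed

lemma H_Theta_eigen_local_bound:
  assumes "x \<in> \<Theta>" "H_Theta \<Theta> lam calV calU \<phi> x = E * \<phi> x"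
  shows "cmod (complex_of_real (lam * Vpot calV x + Upot calU x) - E) * cmod (\<phi> x)
           \<le> (\<Sum>y\<in>{y\<in>\<Theta>. l1dist y x = 1}. cmod (\<phi> y))"
proof -
  have "- (\<Sum>y\<in>{y\<in>\<Theta>. l1dist y x = 1}. \<phi> y)
          + complex_of_real (lam * Vpot calV x + Upot calU x) * \<phi> x = E * \<phi> x"
    using assms by (simp only: H_Theta_def if_True)
  then have "(complex_of_real (lam * Vpot calV x + Upot calU x) - E) * \<phi> x
          = (\<Sum>y\<in>{y\<in>\<Theta>. l1dist y x = 1}. \<phi> y)"
    by (simp add: algebra_simps)
  then have "cmod (complex_of_real (lam * Vpot calV x + Upot calU x) - E) * cmod (\<phi> x)
          = cmod (\<Sum>y\<in>{y\<in>\<Theta>. l1dist y x = 1}. \<phi> y)"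
    by (metis norm_mult)
  also have "\<dots> \<le> (\<Sum>y\<in>{y\<in>\<Theta>. l1dist y x = 1}. cmod (\<phi> y))"
    by (rule norm_sum)
  finally show ?thesis .
qed

lemma coefficient_le_at_maximum:
  fixes f :: "'a \<Rightarrow> real"
  assumes "a * f x \<le> (\<Sum>z\<in>A. f z)" "\<And>z. z \<in> A \<Longrightarrow> f z \<le> f x"
    and "real (card A) \<le> D" "f x > 0"
  shows "a \<le> D"
proof -
  note \<open>a * f x \<le> (\<Sum>z\<in>A. f z)\<close>
  also have "(\<Sum>z\<in>A. f z) \<le> real (card A) * f x"
    using assms(2) by (rule sum_bounded_above)
  also have "\<dots> \<le> D * f x"
    using assms(3,4) by (intro mult_right_mono) simp_all
  finally show ?thesis
    using assms(4) by simp
qed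

lemma decay_by_distance:
  fixes f :: "'a \<Rightarrow> real" and \<rho> :: "'a \<Rightarrow> nat" and nbrs :: "'a \<Rightarrow> 'a set"
  assumes bounded: "\<And>y. y \<in> S \<Longrightarrow> f y \<le> 1"
    and nbrs: "\<And>y z. z \<in> nbrs y \<Longrightarrow> z \<in> S \<and> \<rho> y \<le> \<rho> z + 1"
    and card: "\<And>y. real (card (nbrs y)) \<le> D"
    and local: "\<And>y. y \<in> S \<Longrightarrow> \<rho> y \<ge> 1 \<Longrightarrow> c * f y \<le> (\<Sum>z\<in>nbrs y. f z)"
    and "D \<ge> 0" "c > 0"
    and "y \<in> S"
  shows "f y \<le> (D / c) ^ \<rho> y"
proof -
  have "\<forall>y\<in>S. k \<le> \<rho> y \<longrightarrow> f y \<le> (D / c) ^ k" for k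
  proof (induction k)
    case 0
    then show ?case
      using bounded by simp
  next
    case (Suc k)
    show ?case
    proof (intro ballI impI)
      fix y
      assume y: "y \<in> S" "Suc k \<le> \<rho> y"
      have "f z \<le> (D / c) ^ k" if "z \<in> nbrs y" for z
        using Suc.IH nbrs[OF that] y(2) by auto
      then have "(\<Sum>z\<in>nbrs y. f z) \<le> real (card (nbrs y)) * (D / c) ^ k"
        by (rule sum_bounded_above)
      also have "\<dots> \<le> D * (D / c) ^ k"
        using card \<open>D \<ge> 0\<close> \<open>c > 0\<close> by (intro mult_right_mono) simp_all
      finally have "c * f y \<le> D * (D / c) ^ k"
        using local[OF y(1)] y(2) by simp
      then show "f y \<le> (D / c) ^ Suc k"
        using \<open>c > 0\<close> by (simp add: pos_le_divide_eq mult.commute)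
    qed
  qed
  then show ?thesis
    using \<open>y \<in> S\<close> by blast
qed

lemma decay_from_potential_gap:
  fixes \<phi> :: "'a \<Rightarrow> complex" and W :: "'a \<Rightarrow> real" and \<rho> :: "'a \<Rightarrow> 'a \<Rightarrow> nat"
  assumes fin: "finite S" and norm: "(\<Sum>x\<in>S. (cmod (\<phi> x))\<^sup>2) = 1"
    and local: "\<And>y. y \<in> S \<Longrightarrow>
                  cmod (complex_of_real (W y) - E) * cmod (\<phi> y) \<le> (\<Sum>z\<in>nbrs y. cmod (\<phi> z))"
    and nbrs: "\<And>x y z. z \<in> nbrs y \<Longrightarrow> z \<in> S \<and> \<rho> y x \<le> \<rho> z x + 1"
    and card: "\<And>y. real (card (nbrs y)) \<le> D"
    and gap: "\<And>x y. x \<in> S \<Longrightarrow> y \<in> S \<Longrightarrow> \<rho> y x \<ge> 1 \<Longrightarrow> \<eta> \<le> \<bar>W y - W x\<bar>"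
    and "\<eta> > D"
  shows "\<exists>x\<in>S. \<forall>y\<in>S. cmod (\<phi> y) \<le> (D / (\<eta> - D)) ^ \<rho> y x"
proof -
  obtain x0 where x0: "x0 \<in> S" "\<phi> x0 \<noteq> 0" "\<And>y. y \<in> S \<Longrightarrow> cmod (\<phi> y) \<le> cmod (\<phi> x0)"
    using ex_max_norm_nonzero_if_sum_squares_eq_1[OF fin norm] by blast
  have E_near: "cmod (complex_of_real (W x0) - E) \<le> D"
    by (rule coefficient_le_at_maximum[where f = "\<lambda>y. cmod (\<phi> y)"])
      (use local[OF x0(1)] card x0 nbrs in auto)
  have far: "(\<eta> - D) * cmod (\<phi> y) \<le> (\<Sum>z\<in>nbrs y. cmod (\<phi> z))"
    if "y \<in> S" "\<rho> y x0 \<ge> 1" for y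
  proof -
    have "\<eta> \<le> \<bar>W y - W x0\<bar>"
      by (rule gap[OF x0(1) that])
    also have "\<dots> = cmod ((complex_of_real (W y) - E) - (complex_of_real (W x0) - E))"
      by (metis diff_diff_eq2 diff_add_cancel norm_of_real of_real_diff)
    also have "\<dots> \<le> cmod (complex_of_real (W y) - E) + cmod (complex_of_real (W x0) - E)"
      by (rule norm_triangle_ineq4)
    finally have "\<eta> - D \<le> cmod (complex_of_real (W y) - E)"
      using E_near by linarith
    then show ?thesis
      using local[OF that(1)] by (smt (verit) mult_right_mono norm_ge_zero)
  qed
  have "D \<ge> 0"
    using order_trans[OF of_nat_0_le_iff card] .
  have "\<eta> - D > 0"
    using \<open>\<eta> > D\<close> by simp
  show ?thesis
  proof (intro bexI ballI)
    fix y
    assume "y \<in> S"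
    show "cmod (\<phi> y) \<le> (D / (\<eta> - D)) ^ \<rho> y x0"
      by (rule decay_by_distance[OF norm_le_1_if_sum_squares_eq_1[OF fin norm] nbrs card far
            \<open>D \<ge> 0\<close> \<open>\<eta> - D > 0\<close> \<open>y \<in> S\<close>])
  qed (fact x0(1))
qed

theorem lemma4p4:
  fixes \<Theta> :: "('n::{finite,linorder}, 'd::finite) config set"
    and lam \<eta> :: real
    and calV calU :: "('d \<Rightarrow> int) \<Rightarrow> real"
    and \<phi> :: "('n, 'd) config \<Rightarrow> complex"
    and E :: complex
  assumes lam: "lam > 0"
    and Ufin: "finite {z. calU z \<noteq> 0}"
    and fin: "finite \<Theta>"
    and sym: "symmetric_set \<Theta>"
    and eta: "\<eta> > 4 * real CARD('n) * real CARD('d)"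
    and gap: "\<And>x y. x \<in> \<Theta> \<Longrightarrow> y \<in> \<Theta> \<Longrightarrow>
               (\<forall>\<pi>. \<pi> permutes (UNIV::'n set) \<longrightarrow> x \<noteq> perm_act \<pi> y) \<Longrightarrow>
               \<bar>(lam * Vpot calV x + Upot calU x) - (lam * Vpot calV y + Upot calU y)\<bar> \<ge> \<eta>"
    and norm: "(\<Sum>x\<in>\<Theta>. (cmod (\<phi> x))\<^sup>2) = 1"
    and eig: "\<And>x. x \<in> \<Theta> \<Longrightarrow> H_Theta \<Theta> lam calV calU \<phi> x = E * \<phi> x"
  shows "\<exists>x\<in>\<Theta>. \<forall>y\<in>\<Theta>.
           cmod (\<phi> y) \<le> (2 * real CARD('n) * real CARD('d)
                            / (\<eta> - 2 * real CARD('n) * real CARD('d))) ^ sym_dist y x"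
proof -
  define D where "D = 2 * real CARD('n) * real CARD('d)"
  define nbrs where "nbrs x = {y\<in>\<Theta>. l1dist y x = 1}" for x :: "('n, 'd) config"
  have card: "real (card (nbrs x)) \<le> D" for x
    using of_nat_mono[OF card_l1dist_eq_1_le[of \<Theta> x]] unfolding D_def nbrs_def by simp
  have nbrs_closer: "z \<in> \<Theta> \<and> sym_dist y x \<le> sym_dist z x + 1" if "z \<in> nbrs y" for x y z
    using that sym_dist_triangle[of y x z] l1dist_commute[of y z] by (simp add: nbrs_def)
  have local: "cmod (complex_of_real (lam * Vpot calV y + Upot calU y) - E) * cmod (\<phi> y)
                 \<le> (\<Sum>z\<in>nbrs y. cmod (\<phi> z))" if "y \<in> \<Theta>" for y
    unfolding nbrs_def by (rule H_Theta_eigen_local_bound[OF that eig[OF that]])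
  have sym_gap: "\<eta> \<le> \<bar>(lam * Vpot calV y + Upot calU y) - (lam * Vpot calV x + Upot calU x)\<bar>"
    if "x \<in> \<Theta>" "y \<in> \<Theta>" "sym_dist y x \<ge> 1" for x y
    using gap[OF that(2,1)] sym_dist_perm_act[of _ x] that(3) by force
  have "D \<ge> 0"
    unfolding D_def by simp
  then have "\<eta> > D"
    using eta D_def by linarith
  from decay_from_potential_gap[OF fin norm local nbrs_closer card sym_gap this]
  show ?thesis
    unfolding D_def .
qed

end
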